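(* Suppose the cost function $C$ is subadditive and valuations are arbitrary (monotone and normalized). Then the Sequential Mechanism with lexicographic tie-breaking is weakly groupstrategyproof, $1$-budget-balanced (i.e. $\sum_ip_i=C(\overrightarrow{ALG})$), and is an $n$-approximation to the social cost.
   Context: Setting. $N=\{1,\dots,n\}$ is a set of players and $M_1,\dots,M_n$ are pairwise disjoint finite sets; $M=\bigcup_i M_i$; allocations $\vec S=(S_1,\dots,S_n)$ with $S_i\subseteq M_i$ are identified with subsets of $M$. A cost function is a monotone $C:2^M\to\mathbb{R}_{\ge0}$ with $C(\emptyset)=0$; subadditive: $C(S)+C(T)\ge C(S\cup T)$. Valuations $v_i:2^{M_i}\to\mathbb{R}_{\ge0}$ are monotone with $v_i(\emptyset)=0$. Sequential Mechanism with lexicographic tie-breaking: start with $ALG_i=\emptyset$ for all $i$; for $i=1,\dots,n$ in order, set $ALG_i$ to the lexicographically first element (under a fixed order) of $\arg\max_{S\subseteq M_i}v_i(S)-[C(\overrightarrow{ALG}\cup S)-C(\overrightarrow{ALG})]$ (with $\overrightarrow{ALG}$ the current allocation of players $1,\dots,i-1$), and charge $p_i=C(ALG_1,\dots,ALG_i)-C(ALG_1,\dots,ALG_{i-1})$. Weakly groupstrategyproof: for every $K\subseteq N$ and every joint misreport by $K$ (others truthful), if $v_i(S_i)-p_i\le v_i(S'_i)-p'_i$ for all $i\in K$ then $v_j(S_j)-p_j=v_j(S'_j)-p'_j$ for some $j\in K$, where $(\vec S,\vec p)$ and $(\vec S',\vec p')$ are the outputs under truthful reports and under the misreport. Social cost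 $\pi(\vec S)=C(\vec S)+\sum_i[v_i(M_i)-v_i(S_i)]$; $n$-approximation: $\pi(\overrightarrow{ALG})\le n\min_{\vec S}\pi(\vec S)$ for all profiles. *)

theory Defs
  imports Complex_Main
begin

text \<open>Players are indexed 0,...,n-1 (player i is processed i-th). Item sets of
player i: M i. Reported valuation profiles b :: nat => 'a set => real.\<close>

definition cost_function :: "'a set \<Rightarrow> ('a set \<Rightarrow> real) \<Rightarrow> bool" where
  "cost_function MM C \<longleftrightarrow> C {} = 0 \<and> (\<forall>S. S \<subseteq> MM \<longrightarrow> C S \<ge> 0)
     \<and> (\<forall>S T. S \<subseteq> T \<and> T \<subseteq> MM \<longrightarrow> C S \<le> C T)"

definition subadditive :: "'a set \<Rightarrow> ('a set \<Rightarrow> real) \<Rightarrow> bool" where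
  "subadditive MM C \<longleftrightarrow> (\<forall>S T. S \<subseteq> MM \<and> T \<subseteq> MM \<longrightarrow> C (S \<union> T) \<le> C S + C T)"

definition valuation :: "'a set \<Rightarrow> ('a set \<Rightarrow> real) \<Rightarrow> bool" where
  "valuation Mi w \<longleftrightarrow> w {} = 0 \<and> (\<forall>S. S \<subseteq> Mi \<longrightarrow> w S \<ge> 0)
     \<and> (\<forall>S T. S \<subseteq> T \<and> T \<subseteq> Mi \<longrightarrow> w S \<le> w T)"

definition strict_total_on :: "'b set \<Rightarrow> ('b \<Rightarrow> 'b \<Rightarrow> bool) \<Rightarrow> bool" where
  "strict_total_on A R \<longleftrightarrow> (\<forall>x\<in>A. \<not> R x x)
     \<and> (\<forall>x\<in>A. \<forall>y\<in>A. \<forall>z\<in>A. R x y \<and> R y z \<longrightarrow> R x z)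
     \<and> (\<forall>x\<in>A. \<forall>y\<in>A. x \<noteq> y \<longrightarrow> R x y \<or> R y x)"

definition lexfirst :: "('b \<Rightarrow> 'b \<Rightarrow> bool) \<Rightarrow> 'b set \<Rightarrow> 'b" where
  "lexfirst R A = (THE x. x \<in> A \<and> (\<forall>y\<in>A. y \<noteq> x \<longrightarrow> R x y))"

definition seq_choice ::
  "('a set \<Rightarrow> real) \<Rightarrow> (nat \<Rightarrow> 'a set) \<Rightarrow> (nat \<Rightarrow> 'a set \<Rightarrow> 'a set \<Rightarrow> bool)
   \<Rightarrow> (nat \<Rightarrow> 'a set \<Rightarrow> real) \<Rightarrow> nat \<Rightarrow> 'a set \<Rightarrow> 'a set" where
  "seq_choice C M R b i A = lexfirst (R i)
     {S. S \<subseteq> M i \<and> (\<forall>T. T \<subseteq> M i \<longrightarrow>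
          b i T - (C (A \<union> T) - C A) \<le> b i S - (C (A \<union> S) - C A))}"

fun seq_prefix ::
  "('a set \<Rightarrow> real) \<Rightarrow> (nat \<Rightarrow> 'a set) \<Rightarrow> (nat \<Rightarrow> 'a set \<Rightarrow> 'a set \<Rightarrow> bool)
   \<Rightarrow> (nat \<Rightarrow> 'a set \<Rightarrow> real) \<Rightarrow> nat \<Rightarrow> 'a set" where
  "seq_prefix C M R b 0 = {}"
| "seq_prefix C M R b (Suc k) =
     seq_prefix C M R b k \<union> seq_choice C M R b k (seq_prefix C M R b k)"

definition seq_alloc ::
  "('a set \<Rightarrow> real) \<Rightarrow> (nat \<Rightarrow> 'a set) \<Rightarrow> (nat \<Rightarrow> 'a set \<Rightarrow> 'a set \<Rightarrow> bool)
   \<Rightarrow> (nat \<Rightarrow> 'a set \<Rightarrow> real) \<Rightarrow> nat \<Rightarrow> 'a set" where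
  "seq_alloc C M R b i = seq_choice C M R b i (seq_prefix C M R b i)"

definition seq_price ::
  "('a set \<Rightarrow> real) \<Rightarrow> (nat \<Rightarrow> 'a set) \<Rightarrow> (nat \<Rightarrow> 'a set \<Rightarrow> 'a set \<Rightarrow> bool)
   \<Rightarrow> (nat \<Rightarrow> 'a set \<Rightarrow> real) \<Rightarrow> nat \<Rightarrow> real" where
  "seq_price C M R b i = C (seq_prefix C M R b (Suc i)) - C (seq_prefix C M R b i)"

text \<open>Utility of player i (true valuation v) when the reported profile is b.\<close>
definition seq_utility ::
  "('a set \<Rightarrow> real) \<Rightarrow> (nat \<Rightarrow> 'a set) \<Rightarrow> (nat \<Rightarrow> 'a set \<Rightarrow> 'a set \<Rightarrow> bool)
   \<Rightarrow> (nat \<Rightarrow> 'a set \<Rightarrow> real) \<Rightarrow> (nat \<Rightarrow> 'a set \<Rightarrow> real) \<Rightarrow> nat \<Rightarrow> real" where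
  "seq_utility C M R v b i = v i (seq_alloc C M R b i) - seq_price C M R b i"

definition weakly_gsp ::
  "nat \<Rightarrow> ('a set \<Rightarrow> real) \<Rightarrow> (nat \<Rightarrow> 'a set) \<Rightarrow> (nat \<Rightarrow> 'a set \<Rightarrow> 'a set \<Rightarrow> bool)
   \<Rightarrow> (nat \<Rightarrow> 'a set \<Rightarrow> real) \<Rightarrow> bool" where
  "weakly_gsp n C M R v \<longleftrightarrow>
     (\<forall>K v'. K \<subseteq> {..<n} \<and> K \<noteq> {} \<and> (\<forall>i\<in>K. valuation (M i) (v' i))
        \<and> (\<forall>i<n. i \<notin> K \<longrightarrow> v' i = v i)
        \<and> (\<forall>i\<in>K. seq_utility C M R v v i \<le> seq_utility C M R v v' i)
        \<longrightarrow> (\<exists>j\<in>K. seq_utility C M R v v j = seq_utility C M R v v' j))"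

definition social_cost ::
  "nat \<Rightarrow> ('a set \<Rightarrow> real) \<Rightarrow> (nat \<Rightarrow> 'a set) \<Rightarrow> (nat \<Rightarrow> 'a set \<Rightarrow> real)
   \<Rightarrow> (nat \<Rightarrow> 'a set) \<Rightarrow> real" where
  "social_cost n C M v S = C (\<Union>i<n. S i) + (\<Sum>i<n. v i (M i) - v i (S i))"

end

theory Submission
  imports Defs
begin

text \<open>Budget balance is a telescoping sum of the marginal-cost prices. For group
strategyproofness, look at the first member i of a deviating coalition: all earlier
players report truthfully, so i faces the same partial allocation as under truthful
reporting, and there its truthful choice already maximises its true utility; hence i
cannot strictly gain. For the approximation, the optimality of player i's choice
compared with the bundle S i of any allocation S, together with subadditivity and
monotonicity of C, bounds i's true disutility plus payment by
v i (M i) - v i (S i) + C (\<Union>j<n. S j); summing over the n players gives at most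
n times the social cost of S.\<close>

lemma strict_total_on_ex_least:
  assumes "finite A" "A \<noteq> {}" "strict_total_on B R" "A \<subseteq> B"
  shows "\<exists>x\<in>A. \<forall>y\<in>A. y \<noteq> x \<longrightarrow> R x y"
  using assms
proof (induction A rule: finite_ne_induct)
  case (singleton x)
  then show ?case by simp
next
  case (insert a F)
  then obtain x where x: "x \<in> F" "\<forall>y\<in>F. y \<noteq> x \<longrightarrow> R x y"
    by blast
  have trans: "\<forall>x\<in>B. \<forall>y\<in>B. \<forall>z\<in>B. R x y \<and> R y z \<longrightarrow> R x z"
    and total: "\<forall>x\<in>B. \<forall>y\<in>B. x \<noteq> y \<longrightarrow> R x y \<or> R y x"
    using insert.prems(1) unfolding strict_total_on_def by blast+
  have in_B: "a \<in> B" "x \<in> B" "F \<subseteq> B"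
    using insert.prems(2) x by auto
  show ?case
  proof (cases "R a x")
    case True
    have "R a y" if "y \<in> F" for y
      using that x True trans in_B by (cases "y = x") blast+
    then show ?thesis by blast
  next
    case False
    have "a \<noteq> x" using insert.hyps x by auto
    then have "R x a" using total in_B False by blast
    then show ?thesis using x by blast
  qed
qed

lemma lexfirst_in:
  assumes "finite A" "A \<noteq> {}" "strict_total_on B R" "A \<subseteq> B"
  shows "lexfirst R A \<in> A"
proof -
  obtain x where x: "x \<in> A" "\<forall>y\<in>A. y \<noteq> x \<longrightarrow> R x y"
    using strict_total_on_ex_least[OF assms] by blast
  have irrefl: "\<forall>x\<in>B. \<not> R x x"
    and trans: "\<forall>x\<in>B. \<forall>y\<in>B. \<forall>z\<in>B. R x y \<and> R y z \<longrightarrow> R x z"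
    using assms(3) unfolding strict_total_on_def by blast+
  have unique: "z = x" if "z \<in> A" "\<forall>y\<in>A. y \<noteq> z \<longrightarrow> R z y" for z
  proof (rule ccontr)
    assume "z \<noteq> x"
    then have "R z x" "R x z" using that x by auto
    then show False using irrefl trans that x assms(4) by blast
  qed
  have "lexfirst R A = x"
    unfolding lexfirst_def
  proof (rule the_equality)
    show "x \<in> A \<and> (\<forall>y\<in>A. y \<noteq> x \<longrightarrow> R x y)" using x by blast
  qed (use unique in blast)
  then show ?thesis using x by simp
qed

lemma seq_choice_optimal:
  assumes "finite (M i)" "strict_total_on (Pow (M i)) (R i)"
  shows "seq_choice C M R b i A \<subseteq> M i"
    and "T \<subseteq> M i \<Longrightarrow> b i T - (C (A \<union> T) - C A)
           \<le> b i (seq_choice C M R b i A) - (C (A \<union> seq_choice C M R b i A) - C A)"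
proof -
  define f where "f S = b i S - (C (A \<union> S) - C A)" for S
  define X where "X = {S. S \<subseteq> M i \<and> (\<forall>T. T \<subseteq> M i \<longrightarrow> f T \<le> f S)}"
  have fin_Pow: "finite (Pow (M i))" using assms(1) by simp
  have "Max (f ` Pow (M i)) \<in> f ` Pow (M i)"
    using fin_Pow by (intro Max_in) auto
  then obtain S where S: "S \<in> Pow (M i)" "f S = Max (f ` Pow (M i))"
    by auto
  have "S \<in> X"
    using S fin_Pow unfolding X_def by auto
  moreover have "X \<subseteq> Pow (M i)" unfolding X_def by auto
  ultimately have "lexfirst (R i) X \<in> X"
    using fin_Pow assms(2) by (intro lexfirst_in) (auto intro: finite_subset)
  moreover have "seq_choice C M R b i A = lexfirst (R i) X"
    unfolding seq_choice_def X_def f_def ..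
  ultimately have "seq_choice C M R b i A \<in> X" by simp
  then show "seq_choice C M R b i A \<subseteq> M i"
    and "T \<subseteq> M i \<Longrightarrow> b i T - (C (A \<union> T) - C A)
           \<le> b i (seq_choice C M R b i A) - (C (A \<union> seq_choice C M R b i A) - C A)"
    unfolding X_def f_def by blast+
qed

lemma seq_prefix_eq_Union_alloc: "seq_prefix C M R b k = (\<Union>j<k. seq_alloc C M R b j)"
  by (induction k) (auto simp: seq_alloc_def lessThan_Suc)

lemma seq_prefix_cong:
  "(\<And>j. j < k \<Longrightarrow> b j = b' j) \<Longrightarrow> seq_prefix C M R b k = seq_prefix C M R b' k"
  by (induction k) (auto simp: seq_choice_def)

lemma seq_prefix_subset:
  assumes "\<forall>i<n. finite (M i)" "\<forall>i<n. strict_total_on (Pow (M i)) (R i)" "k \<le> n"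
  shows "seq_prefix C M R b k \<subseteq> (\<Union>j<n. M j)"
  using assms(3)
proof (induction k)
  case 0
  then show ?case by simp
next
  case (Suc k)
  then have "seq_choice C M R b k (seq_prefix C M R b k) \<subseteq> M k"
    using assms(1,2) by (intro seq_choice_optimal(1)) auto
  then show ?case using Suc by force
qed

lemma seq_price_eq:
  "seq_price C M R b i
     = C (seq_prefix C M R b i \<union> seq_alloc C M R b i) - C (seq_prefix C M R b i)"
  by (simp add: seq_price_def seq_alloc_def)

lemma seq_budget_balanced:
  assumes "C {} = 0"
  shows "(\<Sum>i<n. seq_price C M R b i) = C (\<Union>i<n. seq_alloc C M R b i)"
proof -
  have "(\<Sum>i<n. seq_price C M R b i) = C (seq_prefix C M R b n) - C (seq_prefix C M R b 0)"
    unfolding seq_price_def by (rule sum_lessThan_telescope)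
  then show ?thesis using assms by (simp add: seq_prefix_eq_Union_alloc)
qed

lemma seq_utility_truthful_ge:
  assumes "finite (M i)" "strict_total_on (Pow (M i)) (R i)"
    and "\<And>j. j < i \<Longrightarrow> b j = v j"
  shows "seq_utility C M R v b i \<le> seq_utility C M R v v i"
proof -
  define P where "P = seq_prefix C M R v i"
  have same_prefix: "seq_prefix C M R b i = P"
    unfolding P_def using assms(3) by (rule seq_prefix_cong)
  have "seq_alloc C M R b i \<subseteq> M i"
    unfolding seq_alloc_def by (rule seq_choice_optimal(1)[of M i R, OF assms(1,2)])
  then have "v i (seq_alloc C M R b i) - (C (P \<union> seq_alloc C M R b i) - C P)
      \<le> v i (seq_alloc C M R v i) - (C (P \<union> seq_alloc C M R v i) - C P)"
    unfolding seq_alloc_def P_def by (rule seq_choice_optimal(2)[of M i R, OF assms(1,2)])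
  then show ?thesis
    unfolding seq_utility_def seq_price_eq same_prefix P_def by simp
qed

lemma seq_weakly_gsp:
  assumes "\<forall>i<n. finite (M i)" "\<forall>i<n. strict_total_on (Pow (M i)) (R i)"
  shows "weakly_gsp n C M R v"
  unfolding weakly_gsp_def
proof (intro allI impI)
  fix K v'
  assume K: "K \<subseteq> {..<n} \<and> K \<noteq> {} \<and> (\<forall>i\<in>K. valuation (M i) (v' i))
      \<and> (\<forall>i<n. i \<notin> K \<longrightarrow> v' i = v i)
      \<and> (\<forall>i\<in>K. seq_utility C M R v v i \<le> seq_utility C M R v v' i)"
  define i where "i = Min K"
  have "finite K" using K finite_subset by blast
  then have "i \<in> K" and before_i: "\<And>j. j < i \<Longrightarrow> j \<notin> K"
    unfolding i_def using K by (auto dest: Min_le)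
  then have "i < n" using K by auto
  then have "seq_utility C M R v v' i \<le> seq_utility C M R v v i"
    using assms K before_i by (intro seq_utility_truthful_ge) auto
  then show "\<exists>j\<in>K. seq_utility C M R v v j = seq_utility C M R v v' j"
    using K \<open>i \<in> K\<close> by force
qed

lemma seq_player_cost_le:
  assumes "\<forall>i<n. finite (M i)" "\<forall>i<n. strict_total_on (Pow (M i)) (R i)"
    and "cost_function (\<Union>i<n. M i) C" "subadditive (\<Union>i<n. M i) C"
    and "i < n" "T \<subseteq> M i" "T \<subseteq> U" "U \<subseteq> (\<Union>i<n. M i)"
  shows "v i (M i) - v i (seq_alloc C M R v i) + seq_price C M R v i
           \<le> v i (M i) - v i T + C U"
proof -
  define P where "P = seq_prefix C M R v i"
  have "P \<subseteq> (\<Union>i<n. M i)"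
    unfolding P_def using assms(1,2,5) by (intro seq_prefix_subset) auto
  then have "C (P \<union> T) \<le> C P + C T"
    using assms(4,5,6) unfolding subadditive_def by blast
  moreover have "C T \<le> C U"
    using assms(3,7,8) unfolding cost_function_def by blast
  moreover have "v i T - (C (P \<union> T) - C P)
      \<le> v i (seq_alloc C M R v i) - (C (P \<union> seq_alloc C M R v i) - C P)"
    unfolding seq_alloc_def P_def using assms(1,2,5,6) by (intro seq_choice_optimal(2)) auto
  ultimately show ?thesis
    unfolding seq_price_eq P_def[symmetric] by simp
qed

lemma seq_social_cost_approx:
  assumes "\<forall>i<n. finite (M i)" "\<forall>i<n. strict_total_on (Pow (M i)) (R i)"
    and cost: "cost_function (\<Union>i<n. M i) C" and "subadditive (\<Union>i<n. M i) C"
    and val: "\<forall>i<n. valuation (M i) (v i)" and S: "\<forall>i<n. S i \<subseteq> M i"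
  shows "social_cost n C M v (seq_alloc C M R v) \<le> real n * social_cost n C M v S"
proof -
  define U where "U = (\<Union>i<n. S i)"
  have S_sub_U: "S i \<subseteq> U" if "i < n" for i
    unfolding U_def using that by blast
  have U_sub: "U \<subseteq> (\<Union>i<n. M i)"
    unfolding U_def using S by blast
  define loss where "loss i = v i (M i) - v i (S i)" for i
  have "loss i \<ge> 0" if "i < n" for i
    using val S that unfolding loss_def valuation_def by auto
  then have loss_nonneg: "sum loss {..<n} \<ge> 0"
    by (intro sum_nonneg) auto
  have C_empty: "C {} = 0" using cost unfolding cost_function_def by simp
  have "social_cost n C M v (seq_alloc C M R v)
      = (\<Sum>i<n. v i (M i) - v i (seq_alloc C M R v i) + seq_price C M R v i)"
    unfolding social_cost_def seq_budget_balanced[of C, OF C_empty, symmetric]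
    by (simp add: sum.distrib)
  also have "\<dots> \<le> (\<Sum>i<n. loss i + C U)"
    unfolding loss_def using assms(1-4) S S_sub_U U_sub
    by (intro sum_mono seq_player_cost_le[of n M R C]) auto
  also have "\<dots> = sum loss {..<n} + real n * C U"
    by (simp add: sum.distrib)
  also have "\<dots> \<le> real n * sum loss {..<n} + real n * C U"
    using loss_nonneg by (cases "n = 0") (auto intro: mult_le_cancel_right1[THEN iffD2])
  also have "\<dots> = real n * social_cost n C M v S"
    unfolding social_cost_def U_def loss_def by (simp add: distrib_left)
  finally show ?thesis .
qed

theorem theorem7p4:
  fixes n :: nat and M :: "nat \<Rightarrow> 'a set" and C :: "'a set \<Rightarrow> real"
    and v :: "nat \<Rightarrow> 'a set \<Rightarrow> real" and R :: "nat \<Rightarrow> 'a set \<Rightarrow> 'a set \<Rightarrow> bool"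
  assumes fin: "\<forall>i<n. finite (M i)"
    and disj: "\<forall>i<n. \<forall>j<n. i \<noteq> j \<longrightarrow> M i \<inter> M j = {}"
    and cost: "cost_function (\<Union>i<n. M i) C"
    and subadd: "subadditive (\<Union>i<n. M i) C"
    and val: "\<forall>i<n. valuation (M i) (v i)"
    and order: "\<forall>i<n. strict_total_on (Pow (M i)) (R i)"
  shows "weakly_gsp n C M R v
    \<and> (\<Sum>i<n. seq_price C M R v i) = C (\<Union>i<n. seq_alloc C M R v i)
    \<and> (\<forall>S. (\<forall>i<n. S i \<subseteq> M i) \<longrightarrow>
         social_cost n C M v (seq_alloc C M R v) \<le> real n * social_cost n C M v S)"
proof (intro conjI allI impI)
  show "weakly_gsp n C M R v"
    using fin order by (rule seq_weakly_gsp)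
  show "(\<Sum>i<n. seq_price C M R v i) = C (\<Union>i<n. seq_alloc C M R v i)"
    using cost unfolding cost_function_def by (simp add: seq_budget_balanced)
  show "social_cost n C M v (seq_alloc C M R v) \<le> real n * social_cost n C M v S"
    if "\<forall>i<n. S i \<subseteq> M i" for S
    using fin order cost subadd val that by (rule seq_social_cost_approx)
qed

end
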